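(* Let $\mathcal{A}\in\mathbb{R}^{n\times n\times n\times n}$ be a real CPS tensor that is not symmetric. Then $\mathcal{A}$ has a CPS decomposition of the form \[ \mathcal{A}=\sum_{i=1}^{R_1}\lambda_i\big(a_i\otimes a_i\otimes\bar a_i\otimes\bar a_i+\bar a_i\otimes\bar a_i\otimes a_i\otimes a_i\big)+\sum_{j=1}^{R_2}\mu_j\, b_j\otimes b_j\otimes b_j\otimes b_j, \] where $\lambda_i,\mu_j\in\mathbb{R}$, $a_i\in\mathbb{C}^n\setminus\mathbb{R}^n$ and $b_j\in\mathbb{R}^n$.
   Context: A tensor $\mathcal{A}\in\mathbb{C}^{n\times n\times n\times n}$ is conjugate partial-symmetric (CPS) if $\mathcal{A}_{ijkl}=\overline{\mathcal{A}_{klij}}$ and $\mathcal{A}_{ijkl}=\mathcal{A}_{jikl}=\mathcal{A}_{ijlk}$ for all indices; a real CPS tensor has real entries. A tensor is symmetric if its entries are invariant under all permutations of the four indices. A CPS decomposition is a representation $\sum_i\lambda_i a_i\otimes a_i\otimes\bar a_i\otimes\bar a_i$ with $\lambda_i\in\mathbb{R}$, $a_i\in\mathbb{C}^n$. *)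

theory Defs
  imports Complex_Main "HOL-Combinatorics.Permutations"
begin

text \<open>Fourth-order tensors in C^(n x n x n x n) are represented as functions
  nat => nat => nat => nat => complex, only the entries with all indices < n
  being relevant. Vectors in C^n are functions nat => complex, entries < n relevant.\<close>

type_synonym tensor4 = "nat \<Rightarrow> nat \<Rightarrow> nat \<Rightarrow> nat \<Rightarrow> complex"

definition cps_tensor :: "nat \<Rightarrow> tensor4 \<Rightarrow> bool" where
  "cps_tensor n A \<longleftrightarrow>
     (\<forall>i<n. \<forall>j<n. \<forall>k<n. \<forall>l<n.
        A i j k l = cnj (A k l i j) \<and> A i j k l = A j i k l \<and> A i j k l = A i j l k)"

definition real_tensor :: "nat \<Rightarrow> tensor4 \<Rightarrow> bool" where
  "real_tensor n A \<longleftrightarrow> (\<forall>i<n. \<forall>j<n. \<forall>k<n. \<forall>l<n. A i j k l \<in> \<real>)"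

definition symmetric_tensor :: "nat \<Rightarrow> tensor4 \<Rightarrow> bool" where
  "symmetric_tensor n A \<longleftrightarrow>
     (\<forall>x::nat\<Rightarrow>nat. (\<forall>m<4. x m < n) \<longrightarrow>
        (\<forall>p::nat\<Rightarrow>nat. p permutes {0..<4} \<longrightarrow>
           A (x (p 0)) (x (p 1)) (x (p 2)) (x (p 3)) = A (x 0) (x 1) (x 2) (x 3)))"

definition outer4 :: "(nat \<Rightarrow> complex) \<Rightarrow> (nat \<Rightarrow> complex) \<Rightarrow> (nat \<Rightarrow> complex) \<Rightarrow> (nat \<Rightarrow> complex) \<Rightarrow> tensor4" where
  "outer4 u v w z = (\<lambda>i j k l. u i * v j * w k * z l)"

definition conj_vec :: "(nat \<Rightarrow> complex) \<Rightarrow> (nat \<Rightarrow> complex)" where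
  "conj_vec a = (\<lambda>i. cnj (a i))"

end

theory Submission
  imports Defs
begin

text \<open>Let \<open>C(a) = a\<otimes>a\<otimes>a\<^sup>*\<otimes>a\<^sup>* + a\<^sup>*\<otimes>a\<^sup>*\<otimes>a\<otimes>a\<close>, where \<open>a\<^sup>*\<close> is the entrywise conjugate.
  For real \<open>x, y\<close> one has \<open>C(x+y)/2 + C(x-y)/2 - C(x+\<i>y) = 4 (x\<otimes>x\<otimes>y\<otimes>y + y\<otimes>y\<otimes>x\<otimes>x)\<close>;
  polarizing once more in \<open>x = x\<^sub>1 \<plusminus> x\<^sub>2\<close>, \<open>y = y\<^sub>1 \<plusminus> y\<^sub>2\<close> writes
  \<open>S(x\<^sub>1,x\<^sub>2)\<otimes>S(y\<^sub>1,y\<^sub>2) + S(y\<^sub>1,y\<^sub>2)\<otimes>S(x\<^sub>1,x\<^sub>2)\<close>, with \<open>S(x,y) = x\<otimes>y + y\<otimes>x\<close>, as a real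
  combination of twelve terms \<open>C(a)\<close>. By the CPS symmetries a real CPS tensor is the sum of
  \<open>A\<^sub>i\<^sub>j\<^sub>k\<^sub>l/8\<close> times these tensors for the unit vectors \<open>e\<^sub>i, e\<^sub>j, e\<^sub>k, e\<^sub>l\<close>, hence a real
  combination of terms \<open>C(a)\<close>. Those with \<open>a\<close> real equal \<open>2 a\<otimes>a\<otimes>a\<otimes>a\<close>; the others have
  \<open>a \<notin> \<real>\<^sup>n\<close>.\<close>

definition cps_pair :: "(nat \<Rightarrow> complex) \<Rightarrow> tensor4" where
  "cps_pair a p q r s =
     outer4 a a (conj_vec a) (conj_vec a) p q r s + outer4 (conj_vec a) (conj_vec a) a a p q r s"

definition cps_combination :: "(real \<times> (nat \<Rightarrow> complex)) list \<Rightarrow> tensor4" where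
  "cps_combination L p q r s = (\<Sum>(c, a)\<leftarrow>L. complex_of_real c * cps_pair a p q r s)"

lemma cps_combination_append:
  "cps_combination (L @ M) p q r s = cps_combination L p q r s + cps_combination M p q r s"
  by (simp add: cps_combination_def)

lemma cps_combination_concat:
  "cps_combination (concat Ls) p q r s = (\<Sum>L\<leftarrow>Ls. cps_combination L p q r s)"
  by (induction Ls) (simp_all add: cps_combination_append, simp add: cps_combination_def)

lemma cps_pair_real:
  assumes "cnj (b p) = b p" "cnj (b q) = b q" "cnj (b r) = b r" "cnj (b s) = b s"
  shows "cps_pair b p q r s = 2 * outer4 b b b b p q r s"
  using assms by (simp add: cps_pair_def outer4_def conj_vec_def)

lemma cps_combination_filter:
  "cps_combination L p q r s
     = cps_combination (filter (\<lambda>x. \<not> P x) L) p q r s + cps_combination (filter P L) p q r s"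
  by (induction L) (auto simp: cps_combination_def)

lemma cps_combination_eq_sum_nth:
  "cps_combination L p q r s
     = (\<Sum>i=1..length L. complex_of_real (fst (L ! (i - 1))) * cps_pair (snd (L ! (i - 1))) p q r s)"
  by (simp add: cps_combination_def sum_list_sum_nth sum.atLeast1_atMost_eq atLeast0LessThan
      case_prod_beta)

definition real_vec :: "nat \<Rightarrow> (nat \<Rightarrow> complex) \<Rightarrow> bool" where
  "real_vec n b \<longleftrightarrow> (\<forall>k<n. b k \<in> \<real>)"

lemma cps_combination_split_real:
  "\<exists>(R1::nat) (R2::nat) (lam::nat \<Rightarrow> real) (a::nat \<Rightarrow> nat \<Rightarrow> complex)
      (mu::nat \<Rightarrow> real) (b::nat \<Rightarrow> nat \<Rightarrow> complex).
     (\<forall>i\<in>{1..R1}. \<not> real_vec n (a i)) \<and> (\<forall>j\<in>{1..R2}. real_vec n (b j)) \<and>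
     (\<forall>p<n. \<forall>q<n. \<forall>r<n. \<forall>s<n. cps_combination L p q r s
        = (\<Sum>i=1..R1. complex_of_real (lam i) * cps_pair (a i) p q r s)
          + (\<Sum>j=1..R2. complex_of_real (mu j) * outer4 (b j) (b j) (b j) (b j) p q r s))"
proof -
  define L\<^sub>1 where "L\<^sub>1 = filter (\<lambda>x. \<not> real_vec n (snd x)) L"
  define L\<^sub>2 where "L\<^sub>2 = filter (\<lambda>x. real_vec n (snd x)) L"
  define lam a where "lam i = fst (L\<^sub>1 ! (i - 1))" and "a i = snd (L\<^sub>1 ! (i - 1))" for i
  define mu b where "mu j = 2 * fst (L\<^sub>2 ! (j - 1))" and "b j = snd (L\<^sub>2 ! (j - 1))" for j
  have a: "\<not> real_vec n (a i)" if "i \<in> {1..length L\<^sub>1}" for i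
  proof -
    have "L\<^sub>1 ! (i - 1) \<in> set L\<^sub>1"
      using that by auto
    then show ?thesis
      by (simp add: L\<^sub>1_def a_def)
  qed
  have b: "real_vec n (b j)" if "j \<in> {1..length L\<^sub>2}" for j
  proof -
    have "L\<^sub>2 ! (j - 1) \<in> set L\<^sub>2"
      using that by auto
    then show ?thesis
      by (simp add: L\<^sub>2_def b_def)
  qed
  have "cps_combination L p q r s
      = (\<Sum>i=1..length L\<^sub>1. complex_of_real (lam i) * cps_pair (a i) p q r s)
        + (\<Sum>j=1..length L\<^sub>2. complex_of_real (mu j) * outer4 (b j) (b j) (b j) (b j) p q r s)"
    if "p < n" "q < n" "r < n" "s < n" for p q r s
  proof -
    have "cps_pair (b j) p q r s = 2 * outer4 (b j) (b j) (b j) (b j) p q r s"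
      if "j \<in> {1..length L\<^sub>2}" for j
      using b[OF that] \<open>p < n\<close> \<open>q < n\<close> \<open>r < n\<close> \<open>s < n\<close>
      by (intro cps_pair_real) (simp_all add: real_vec_def Reals_cnj_iff)
    then have "cps_combination L\<^sub>2 p q r s
        = (\<Sum>j=1..length L\<^sub>2. complex_of_real (mu j) * outer4 (b j) (b j) (b j) (b j) p q r s)"
      unfolding cps_combination_eq_sum_nth by (intro sum.cong) (auto simp: mu_def b_def)
    moreover have "cps_combination L p q r s = cps_combination L\<^sub>1 p q r s + cps_combination L\<^sub>2 p q r s"
      unfolding L\<^sub>1_def L\<^sub>2_def by (rule cps_combination_filter)
    ultimately show ?thesis
      by (simp add: cps_combination_eq_sum_nth[of L\<^sub>1] lam_def a_def)
  qed
  with a b show ?thesis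
    by blast
qed

definition sym_prod :: "(nat \<Rightarrow> complex) \<Rightarrow> (nat \<Rightarrow> complex) \<Rightarrow> nat \<Rightarrow> nat \<Rightarrow> complex" where
  "sym_prod x y p q = x p * y q + y p * x q"

definition polarize_pair ::
    "real \<Rightarrow> (nat \<Rightarrow> complex) \<Rightarrow> (nat \<Rightarrow> complex) \<Rightarrow> (real \<times> (nat \<Rightarrow> complex)) list" where
  "polarize_pair c x y =
     [(c/2, \<lambda>m. x m + y m), (c/2, \<lambda>m. x m - y m), (-c, \<lambda>m. x m + \<i> * y m)]"

lemma cps_combination_polarize_pair:
  assumes "\<And>m. cnj (x m) = x m" and "\<And>m. cnj (y m) = y m"
  shows "cps_combination (polarize_pair c x y) p q r s
           = complex_of_real c * 4 * (x p * x q * y r * y s + y p * y q * x r * x s)"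
proof -
  have "cnj (x m + \<i> * y m) = x m - \<i> * y m" for m
    using assms by simp
  then show ?thesis
    using assms
    by (simp add: cps_combination_def polarize_pair_def cps_pair_def outer4_def conj_vec_def
        algebra_simps)
qed

definition polarize_quad ::
    "real \<Rightarrow> (nat \<Rightarrow> complex) \<Rightarrow> (nat \<Rightarrow> complex) \<Rightarrow> (nat \<Rightarrow> complex) \<Rightarrow> (nat \<Rightarrow> complex)
       \<Rightarrow> (real \<times> (nat \<Rightarrow> complex)) list" where
  "polarize_quad c x\<^sub>1 x\<^sub>2 y\<^sub>1 y\<^sub>2 =
     concat (map (\<lambda>(\<sigma>, \<tau>). polarize_pair (c * \<sigma> * \<tau> / 128)
                                (\<lambda>m. x\<^sub>1 m + of_real \<sigma> * x\<^sub>2 m) (\<lambda>m. y\<^sub>1 m + of_real \<tau> * y\<^sub>2 m))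
       [(1, 1), (1, -1), (-1, 1), (-1, -1)])"

lemma cps_combination_polarize_quad:
  assumes "\<And>m. cnj (x\<^sub>1 m) = x\<^sub>1 m" "\<And>m. cnj (x\<^sub>2 m) = x\<^sub>2 m"
    and "\<And>m. cnj (y\<^sub>1 m) = y\<^sub>1 m" "\<And>m. cnj (y\<^sub>2 m) = y\<^sub>2 m"
  shows "cps_combination (polarize_quad c x\<^sub>1 x\<^sub>2 y\<^sub>1 y\<^sub>2) p q r s
           = complex_of_real c / 8 * (sym_prod x\<^sub>1 x\<^sub>2 p q * sym_prod y\<^sub>1 y\<^sub>2 r s
                                      + sym_prod y\<^sub>1 y\<^sub>2 p q * sym_prod x\<^sub>1 x\<^sub>2 r s)"
proof -
  have "cps_combination (polarize_pair c' (\<lambda>m. x\<^sub>1 m + of_real \<sigma> * x\<^sub>2 m)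
                           (\<lambda>m. y\<^sub>1 m + of_real \<tau> * y\<^sub>2 m)) p q r s
      = complex_of_real c' * 4 *
          ((x\<^sub>1 p + of_real \<sigma> * x\<^sub>2 p) * (x\<^sub>1 q + of_real \<sigma> * x\<^sub>2 q)
             * (y\<^sub>1 r + of_real \<tau> * y\<^sub>2 r) * (y\<^sub>1 s + of_real \<tau> * y\<^sub>2 s)
           + (y\<^sub>1 p + of_real \<tau> * y\<^sub>2 p) * (y\<^sub>1 q + of_real \<tau> * y\<^sub>2 q)
             * (x\<^sub>1 r + of_real \<sigma> * x\<^sub>2 r) * (x\<^sub>1 s + of_real \<sigma> * x\<^sub>2 s))"
    for c' \<sigma> \<tau>
    using assms by (intro cps_combination_polarize_pair) simp_all
  then show ?thesis
    unfolding polarize_quad_def cps_combination_concat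
    by (simp only: list.map prod.case sum_list_simps o_def)
      (simp add: sym_prod_def field_simps)
qed

definition unit_vec :: "nat \<Rightarrow> nat \<Rightarrow> complex" where
  "unit_vec i m = (if m = i then 1 else 0)"

lemma sum_unit_vec:
  assumes "p < n"
  shows "(\<Sum>i<n. unit_vec i p * g i) = g p"
  using assms by (simp add: unit_vec_def if_distrib[of "\<lambda>x. x * _"] sum.delta' cong: if_cong)

lemma sum_unit_vec_sym_prod:
  assumes "p < n" "q < n"
  shows "(\<Sum>i<n. \<Sum>j<n. f i j * sym_prod (unit_vec i) (unit_vec j) p q) = f p q + f q p"
proof -
  have "(\<Sum>i<n. \<Sum>j<n. f i j * sym_prod (unit_vec i) (unit_vec j) p q)
      = (\<Sum>i<n. unit_vec i p * (\<Sum>j<n. unit_vec j q * f i j))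
        + (\<Sum>i<n. unit_vec i q * (\<Sum>j<n. unit_vec j p * f i j))"
    by (simp add: sym_prod_def distrib_left sum.distrib sum_distrib_left mult_ac)
  also have "\<dots> = f p q + f q p"
    using assms by (simp add: sum_unit_vec)
  finally show ?thesis .
qed

lemma sum4_unit_vec_sym_prod:
  assumes "p < n" "q < n" "r < n" "s < n"
  shows "(\<Sum>i<n. \<Sum>j<n. \<Sum>k<n. \<Sum>l<n. f i j k l
            * (sym_prod (unit_vec i) (unit_vec j) p q * sym_prod (unit_vec k) (unit_vec l) r s))
         = f p q r s + f p q s r + f q p r s + f q p s r"
proof -
  have "(\<Sum>i<n. \<Sum>j<n. \<Sum>k<n. \<Sum>l<n. f i j k l
            * (sym_prod (unit_vec i) (unit_vec j) p q * sym_prod (unit_vec k) (unit_vec l) r s))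
      = (\<Sum>i<n. \<Sum>j<n. (\<Sum>k<n. \<Sum>l<n. f i j k l * sym_prod (unit_vec k) (unit_vec l) r s)
            * sym_prod (unit_vec i) (unit_vec j) p q)"
    by (simp add: sum_distrib_left sum_distrib_right mult_ac)
  also have "\<dots> = (\<Sum>i<n. \<Sum>j<n. (f i j r s + f i j s r) * sym_prod (unit_vec i) (unit_vec j) p q)"
    using assms by (simp add: sum_unit_vec_sym_prod)
  also have "\<dots> = f p q r s + f p q s r + f q p r s + f q p s r"
    using assms by (simp add: sum_unit_vec_sym_prod)
  finally show ?thesis .
qed

lemma real_cps_tensor_swaps:
  assumes "cps_tensor n A" "real_tensor n A" "i < n" "j < n" "k < n" "l < n"
  shows "A j i k l = A i j k l" "A i j l k = A i j k l" "A k l i j = A i j k l"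
proof -
  have "A i j k l = cnj (A k l i j)" "A i j k l = A j i k l" "A i j k l = A i j l k"
    using assms unfolding cps_tensor_def by blast+
  moreover have "A k l i j \<in> \<real>"
    using assms unfolding real_tensor_def by blast
  ultimately show "A j i k l = A i j k l" "A i j l k = A i j k l" "A k l i j = A i j k l"
    by (simp_all add: Reals_cnj_iff)
qed

lemma real_cps_tensor_unit_expansion:
  assumes cps: "cps_tensor n A" and re: "real_tensor n A"
    and "p < n" "q < n" "r < n" "s < n"
  shows "A p q r s = (\<Sum>i<n. \<Sum>j<n. \<Sum>k<n. \<Sum>l<n. complex_of_real (Re (A i j k l)) / 8 *
           (sym_prod (unit_vec i) (unit_vec j) p q * sym_prod (unit_vec k) (unit_vec l) r s
            + sym_prod (unit_vec k) (unit_vec l) p q * sym_prod (unit_vec i) (unit_vec j) r s))"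
    (is "_ = ?expansion")
proof -
  define B where "B i j k l = complex_of_real (Re (A i j k l)) / 8" for i j k l
  have B: "B i j k l = A i j k l / 8" if "i < n" "j < n" "k < n" "l < n" for i j k l
    using re that unfolding real_tensor_def B_def by (simp add: Reals_def)
  have "?expansion
      = (\<Sum>i<n. \<Sum>j<n. \<Sum>k<n. \<Sum>l<n. B i j k l
           * (sym_prod (unit_vec i) (unit_vec j) p q * sym_prod (unit_vec k) (unit_vec l) r s))
      + (\<Sum>i<n. \<Sum>j<n. \<Sum>k<n. \<Sum>l<n. B i j k l
           * (sym_prod (unit_vec i) (unit_vec j) r s * sym_prod (unit_vec k) (unit_vec l) p q))"
    unfolding B_def by (simp add: distrib_left sum.distrib mult_ac)
  also have "\<dots> = B p q r s + B p q s r + B q p r s + B q p s r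
                 + (B r s p q + B r s q p + B s r p q + B s r q p)"
    using assms by (simp only: sum4_unit_vec_sym_prod)
  also have "\<dots> = A p q r s"
    using assms by (simp add: B real_cps_tensor_swaps[OF cps re])
  finally show ?thesis ..
qed

lemma real_cps_tensor_cps_combination:
  assumes "cps_tensor n A" and "real_tensor n A"
  obtains L where "\<And>p q r s. p < n \<Longrightarrow> q < n \<Longrightarrow> r < n \<Longrightarrow> s < n \<Longrightarrow>
                     A p q r s = cps_combination L p q r s"
proof
  fix p q r s assume "p < n" "q < n" "r < n" "s < n"
  let ?L = "concat (map (\<lambda>i. concat (map (\<lambda>j. concat (map (\<lambda>k. concat (map (\<lambda>l.
      polarize_quad (Re (A i j k l)) (unit_vec i) (unit_vec j) (unit_vec k) (unit_vec l))
      [0..<n])) [0..<n])) [0..<n])) [0..<n])"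
  have real_unit: "cnj (unit_vec i m) = unit_vec i m" for i m
    by (simp add: unit_vec_def)
  show "A p q r s = cps_combination ?L p q r s"
    by (simp add: cps_combination_concat o_def interv_sum_list_conv_sum_set_nat atLeast0LessThan
        cps_combination_polarize_quad real_unit real_cps_tensor_unit_expansion[OF assms] \<open>p < n\<close>
        \<open>q < n\<close> \<open>r < n\<close> \<open>s < n\<close>)
qed

theorem corollary4p5:
  fixes n :: nat and A :: tensor4
  assumes "cps_tensor n A" and "real_tensor n A" and "\<not> symmetric_tensor n A"
  shows "\<exists>(R1::nat) (R2::nat) (lam::nat \<Rightarrow> real) (a::nat \<Rightarrow> nat \<Rightarrow> complex)
            (mu::nat \<Rightarrow> real) (b::nat \<Rightarrow> nat \<Rightarrow> complex).
           (\<forall>i\<in>{1..R1}. \<exists>k<n. a i k \<notin> \<real>) \<and>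
           (\<forall>j\<in>{1..R2}. \<forall>k<n. b j k \<in> \<real>) \<and>
           (\<forall>p<n. \<forall>q<n. \<forall>r<n. \<forall>s<n.
              A p q r s =
                (\<Sum>i=1..R1. complex_of_real (lam i) *
                   (outer4 (a i) (a i) (conj_vec (a i)) (conj_vec (a i)) p q r s
                    + outer4 (conj_vec (a i)) (conj_vec (a i)) (a i) (a i) p q r s))
              + (\<Sum>j=1..R2. complex_of_real (mu j) * outer4 (b j) (b j) (b j) (b j) p q r s))"
proof -
  obtain L where L: "\<And>p q r s. p < n \<Longrightarrow> q < n \<Longrightarrow> r < n \<Longrightarrow> s < n \<Longrightarrow>
                       A p q r s = cps_combination L p q r s"
    using real_cps_tensor_cps_combination[OF assms(1,2)] by blast
  show ?thesis
    using cps_combination_split_real[of n L]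
    by (simp add: L real_vec_def cps_pair_def)
qed

end
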